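(* For the merging problem with $n=3$ items and $k=2$ slots (with $a_i\ge0$ almost surely and $o_i\ge 0$), the G-FIX mechanism is $(4/5)^3$-approximate: $\mathrm{OBJ}(\mathcal M^F)\ge (4/5)^3\,\mathrm{OBJ}(\mathcal M^* )$, where $\mathcal M^*$ is an optimal mechanism.
   Context: Merging problem: $n$ items indexed by $[n]$, $k\le n$ slots. Each item $i$ has a random ad value $a_i$, drawn independently from a regular distribution $G_i$ ($\boldsymbol a\sim G=\times_i G_i$), and a fixed organic value $o_i\ge0$. A mechanism is a pair of allocation rules $x,y$ with $x_i(\boldsymbol a),y_i(\boldsymbol a)\in\{0,1\}$ ($x_i=1$: item $i$ shown as ad; $y_i=1$: shown organically) satisfying for all $\boldsymbol a,i$: (i) $\sum_i(x_i+y_i)\le k$; (ii) $x_i+y_i\le 1$; (iii) $y_i(a_i,\boldsymbol a_{-i})$ independent of $a_i$; (iv) $x_i(a_i,\boldsymbol a_{-i})$ non-decreasing in $a_i$. Objective $\mathrm{OBJ}=\mathbb E_{\boldsymbol a\sim G}[\sum_i(a_ix_i(\boldsymbol a)+o_iy_i(\boldsymbol a))]$; $\mathcal M^*$ maximizes it subject to (i)–(iv). A mechanism $\mathcal M$ is $\tau$-approximate if $\mathrm{OBJ}(\mathcal M)/\mathrm{OBJ}(\mathcal M^* )\ge\tau$. Notation: for a finite multiset $S$ of reals and $k\le|S|$, $\max^{(k)}S$ is the sum of the $k$ largest elements of $S$. G-FIX-$I$ mechanism $\mathcal M^F_I$ for $I\subseteq[n]$: items in $I$ may only be shown in organic form and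 items outside $I$ only as ads; with $L=\{o_i:i\in I\}\cup\{a_i:i\in[n]\setminus I\}$, it displays (in the designated forms) the $k$ items with the largest values in $L$, i.e. $x_i(\boldsymbol a)=1$ iff $i\notin I$ and $a_i>\max^{(k+1)}L-\max^{(k)}L$, $y_i(\boldsymbol a)=1$ iff $i\in I$ and $o_i>\max^{(k+1)}L-\max^{(k)}L$. Its objective is $\mathrm{OBJ}(\mathcal M_I^F)=\mathbb E_{\boldsymbol a\sim G}[\max^{(k)}L]$. The G-FIX mechanism $\mathcal M^F$ runs the $\mathcal M^F_I$ with the highest objective among all $I\subseteq[n]$ with $|I|\le k$, so $\mathrm{OBJ}(\mathcal M^F)=\max_{I\subseteq[n],|I|\le k}\mathrm{OBJ}(\mathcal M^F_I)$. *)

theory Defs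
  imports "HOL-Probability.Probability"
begin

text \<open>Items are indexed by {..<n} = {0,...,n-1}. A profile of ad values is a function
  nat => real; the product distribution is PiM {..<n} G.\<close>

text \<open>Regular distribution (Myerson): absolutely continuous with a density that is
  positive on an interval support S, and with non-decreasing virtual value
  v - (1 - F v) / f v on S, where F is the CDF.\<close>
definition regular_dist :: "real measure \<Rightarrow> bool" where
  "regular_dist M \<longleftrightarrow> prob_space M \<and>
     (\<exists>f S. is_interval S \<and> f \<in> borel_measurable borel \<and> (\<forall>v\<in>S. 0 < f v) \<and>
        M = density lborel (\<lambda>v. ennreal (f v) * indicator S v) \<and>
        mono_on S (\<lambda>v. v - (1 - measure M {..v}) / f v))"

definition max_k :: "nat \<Rightarrow> real list \<Rightarrow> real" where
  "max_k k xs = sum_list (take k (rev (sort xs)))"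

text \<open>Feasible mechanisms: allocation rules x (ad) and y (organic), conditions (i)-(iv),
  plus measurability (needed for the expectation to be meaningful).\<close>
definition mechanism ::
  "nat \<Rightarrow> nat \<Rightarrow> (nat \<Rightarrow> real measure) \<Rightarrow> (nat \<Rightarrow> (nat \<Rightarrow> real) \<Rightarrow> bool)
     \<Rightarrow> (nat \<Rightarrow> (nat \<Rightarrow> real) \<Rightarrow> bool) \<Rightarrow> bool" where
  "mechanism n k G x y \<longleftrightarrow>
     (\<forall>a. (\<Sum>i<n. of_bool (x i a) + of_bool (y i a)) \<le> (k::nat)) \<and>
     (\<forall>a. \<forall>i<n. \<not> (x i a \<and> y i a)) \<and>
     (\<forall>a. \<forall>i<n. \<forall>v. y i (a(i := v)) = y i a) \<and>
     (\<forall>a. \<forall>i<n. \<forall>v w. v \<le> w \<longrightarrow> x i (a(i := v)) \<longrightarrow> x i (a(i := w))) \<and>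
     (\<forall>i<n. (\<lambda>a. x i a) \<in> measurable (PiM {..<n} G) (count_space UNIV) \<and>
            (\<lambda>a. y i a) \<in> measurable (PiM {..<n} G) (count_space UNIV))"

definition OBJ ::
  "nat \<Rightarrow> (nat \<Rightarrow> real measure) \<Rightarrow> (nat \<Rightarrow> real)
     \<Rightarrow> (nat \<Rightarrow> (nat \<Rightarrow> real) \<Rightarrow> bool) \<Rightarrow> (nat \<Rightarrow> (nat \<Rightarrow> real) \<Rightarrow> bool) \<Rightarrow> ennreal" where
  "OBJ n G ov x y =
     (\<integral>\<^sup>+ a. ennreal (\<Sum>i<n. a i * of_bool (x i a) + ov i * of_bool (y i a)) \<partial>(PiM {..<n} G))"

definition OBJ_fixI ::
  "nat \<Rightarrow> nat \<Rightarrow> (nat \<Rightarrow> real measure) \<Rightarrow> (nat \<Rightarrow> real) \<Rightarrow> nat set \<Rightarrow> ennreal" where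
  "OBJ_fixI n k G ov I =
     (\<integral>\<^sup>+ a. ennreal (max_k k (map (\<lambda>i. if i \<in> I then ov i else a i) [0..<n])) \<partial>(PiM {..<n} G))"

definition OBJ_gfix ::
  "nat \<Rightarrow> nat \<Rightarrow> (nat \<Rightarrow> real measure) \<Rightarrow> (nat \<Rightarrow> real) \<Rightarrow> ennreal" where
  "OBJ_gfix n k G ov = (SUP I\<in>{I. I \<subseteq> {..<n} \<and> card I \<le> k}. OBJ_fixI n k G ov I)"

end

theory Submission
  imports Defs
begin

text \<open>An optimal mechanism earns from item \<open>i\<close> at most \<open>max (E a\<^sub>i) o\<^sub>i\<close> in expectation:
  since \<open>y\<^sub>i\<close> does not depend on \<open>a\<^sub>i\<close>, on each slice \<open>a\<^sub>-\<^sub>i = z\<close> the item is either organic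
  throughout, worth \<open>o\<^sub>i\<close>, or worth at most \<open>a\<^sub>i\<^sup>+\<close>. Let \<open>J\<close> be the items whose organic value
  beats their expected ad value. If \<open>|J| \<le> 2\<close>, G-FIX-\<open>J\<close> earns at least \<open>2/3\<close> of this bound,
  because the two largest of three non-negative numbers make up at least \<open>2/3\<close> of their sum.
  If \<open>J\<close> contains all three items, showing the two largest organic values organically
  already earns \<open>2/3\<close> of \<open>o\<^sub>1 + o\<^sub>2 + o\<^sub>3\<close>. Hence G-FIX is \<open>2/3\<close>-approximate, and
  \<open>2/3 > (4/5)\<^sup>3\<close>.\<close>

lemma sum_list_ge_length_mult:
  fixes xs :: "real list"
  assumes "\<forall>u\<in>set xs. t \<le> u"
  shows "real (length xs) * t \<le> sum_list xs"
  using sum_list_mono[of xs "\<lambda>_. t" id] assms by (simp add: sum_list_triv)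

lemma sum_list_le_length_mult:
  fixes xs :: "real list"
  assumes "\<forall>u\<in>set xs. u \<le> t"
  shows "sum_list xs \<le> real (length xs) * t"
  using sum_list_mono[of xs id "\<lambda>_. t"] assms by (simp add: sum_list_triv)

lemma max_k_ge_mean:
  fixes xs :: "real list"
  assumes "k \<le> length xs"
  shows "real k / real (length xs) * sum_list xs \<le> max_k k xs"
proof -
  define ys where "ys = rev (sort xs)"
  have len: "length ys = length xs" by (simp add: ys_def)
  have sum_ys: "sum_list ys = sum_list xs"
    by (metis ys_def mset_rev mset_sort sum_mset_sum_list)
  have max_k_ys: "max_k k xs = sum_list (take k ys)"
    by (simp add: max_k_def ys_def)
  show ?thesis
  proof (cases "k = length xs")
    case True
    then have "max_k k xs = sum_list xs"
      unfolding max_k_ys using len sum_ys by simp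
    then show ?thesis using True by simp
  next
    case False
    with assms have k: "k < length ys" by (simp add: len)
    define t where "t = ys ! k"
    have drop_k: "drop k ys = t # drop (Suc k) ys"
      by (simp add: t_def Cons_nth_drop_Suc k)
    have "sorted_wrt (\<ge>) ys"
      by (simp add: ys_def sorted_wrt_rev)
    then have "sorted_wrt (\<ge>) (take k ys @ t # drop (Suc k) ys)"
      by (simp flip: drop_k)
    then have top: "\<forall>u\<in>set (take k ys). t \<le> u" and bottom: "\<forall>w\<in>set (drop k ys). w \<le> t"
      by (auto simp: sorted_wrt_append drop_k)
    define T D where "T = sum_list (take k ys)" and "D = sum_list (drop k ys)"
    have T: "real k * t \<le> T"
      using sum_list_ge_length_mult[OF top] k by (simp add: T_def)
    have D: "D \<le> real (length ys - k) * t"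
      using sum_list_le_length_mult[OF bottom] by (simp add: D_def)
    have "real k * D \<le> real k * (real (length ys - k) * t)"
      using D by (simp add: mult_left_mono)
    also have "\<dots> = real (length ys - k) * (real k * t)" by simp
    also have "\<dots> \<le> real (length ys - k) * T"
      using T by (simp add: mult_left_mono)
    finally have "real k * D \<le> real (length ys - k) * T" .
    moreover have "sum_list ys = T + D"
      by (simp add: T_def D_def flip: sum_list_append)
    ultimately have "real k * sum_list xs \<le> real (length xs) * max_k k xs"
      using k by (simp add: max_k_ys len sum_ys[symmetric] T_def algebra_simps)
    moreover have "real (length xs) > 0"
      using k len of_nat_less_iff[of k "length xs"] by linarith
    ultimately show ?thesis
      by (simp add: pos_divide_le_eq ac_simps)
  qed
qed

lemma max_k_two_of_three: "max_k 2 [p, q, r] = max (p + q) (max (p + r) (q + r))"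
  unfolding max_k_def by (auto simp: max_def insort_is_Cons)

lemma ennreal_max_k_ge_mean:
  assumes "k \<le> n" and nonneg: "\<And>i. i < n \<Longrightarrow> 0 \<le> f i"
  shows "ennreal (real k / real n) * (\<Sum>i<n. ennreal (f i)) \<le> ennreal (max_k k (map f [0..<n]))"
proof -
  have "sum_list (map f [0..<n]) = (\<Sum>i<n. f i)"
    by (simp add: interv_sum_list_conv_sum_set_nat atLeast0LessThan)
  moreover have "(\<Sum>i<n. ennreal (f i)) = ennreal (\<Sum>i<n. f i)"
    using nonneg by (intro sum_ennreal) auto
  moreover have "0 \<le> (\<Sum>i<n. f i)"
    using nonneg by (intro sum_nonneg) auto
  ultimately have "ennreal (real k / real n) * (\<Sum>i<n. ennreal (f i))
      = ennreal (real k / real n * sum_list (map f [0..<n]))"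
    by (metis ennreal_mult divide_nonneg_nonneg of_nat_0_le_iff)
  also have "\<dots> \<le> ennreal (max_k k (map f [0..<n]))"
    using max_k_ge_mean[of k "map f [0..<n]"] \<open>k \<le> n\<close> by (intro ennreal_leI) simp
  finally show ?thesis .
qed

lemma sets_regular_dist: "regular_dist M \<Longrightarrow> sets M = sets borel"
  unfolding regular_dist_def by auto

lemma borel_measurable_PiM_component:
  assumes "sets (G i) = sets borel" "i \<in> I"
  shows "(\<lambda>a. a i) \<in> borel_measurable (PiM I G)"
proof -
  have "(\<lambda>a. a i) \<in> measurable (PiM I G) (G i)"
    by (rule measurable_component_singleton) (rule assms(2))
  then show ?thesis
    by (simp add: measurable_cong_sets[OF refl assms(1)])
qed

lemma nn_integral_PiM_component:
  assumes "\<And>j. j \<in> I \<Longrightarrow> prob_space (G j)" "i \<in> I" "f \<in> borel_measurable (G i)"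
  shows "(\<integral>\<^sup>+a. f (a i) \<partial>PiM I G) = (\<integral>\<^sup>+v. f v \<partial>G i)"
proof -
  have "(\<integral>\<^sup>+a. f (a i) \<partial>PiM I G) = (\<integral>\<^sup>+v. f v \<partial>distr (PiM I G) (G i) (\<lambda>a. a i))"
    using assms by (intro nn_integral_distr[symmetric]) auto
  then show ?thesis
    using assms by (simp add: distr_PiM_component)
qed

lemma nn_integral_PiM_le_slices:
  assumes G: "\<And>j. j \<in> I \<Longrightarrow> prob_space (G j)" and I: "finite I" "i \<in> I"
    and f: "f \<in> borel_measurable (PiM I G)"
    and slice: "\<And>z. z \<in> space (PiM (I - {i}) G) \<Longrightarrow> (\<integral>\<^sup>+v. f (z(i := v)) \<partial>G i) \<le> K"
  shows "(\<integral>\<^sup>+a. f a \<partial>PiM I G) \<le> K"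
proof -
  \<comment> \<open>\<open>product_sigma_finite\<close> constrains every factor, so those outside \<open>I\<close> become point masses\<close>
  define G' where "G' j = (if j \<in> I then G j else return (count_space UNIV) undefined)" for j
  have prob': "prob_space (G' j)" for j
    using G by (simp add: G'_def prob_space_return)
  interpret product_sigma_finite G'
    using prob' prob_space_imp_sigma_finite by (auto simp: product_sigma_finite_def)
  have PiM_G': "PiM J G = PiM J G'" if "J \<subseteq> I" for J
    using that by (intro PiM_cong) (auto simp: G'_def)
  have I_split: "I = insert i (I - {i})" using I by auto
  have "(\<integral>\<^sup>+a. f a \<partial>PiM I G) = (\<integral>\<^sup>+a. f a \<partial>PiM (insert i (I - {i})) G')"
    using PiM_G'[of I] I_split by simp
  also have "\<dots> = (\<integral>\<^sup>+z. (\<integral>\<^sup>+v. f (z(i := v)) \<partial>G' i) \<partial>PiM (I - {i}) G')"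
    using I f PiM_G'[of I] I_split by (intro product_nn_integral_insert) auto
  also have "\<dots> \<le> (\<integral>\<^sup>+z. K \<partial>PiM (I - {i}) G')"
    using slice I PiM_G'[of "I - {i}"] by (intro nn_integral_mono) (simp add: G'_def)
  also have "\<dots> = K"
  proof -
    have "prob_space (PiM (I - {i}) G')" by (rule prob_space_PiM) (rule prob')
    then show ?thesis by (simp add: prob_space.emeasure_space_1)
  qed
  finally show ?thesis .
qed

definition best_form_value :: "(nat \<Rightarrow> real measure) \<Rightarrow> (nat \<Rightarrow> real) \<Rightarrow> nat \<Rightarrow> ennreal" where
  "best_form_value G ov i = max (\<integral>\<^sup>+v. ennreal v \<partial>G i) (ennreal (ov i))"

lemma measurable_organic_else_ad:
  assumes mech: "mechanism n k G x y" and sets: "sets (G i) = sets borel" and i: "i < n"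
  shows "(\<lambda>a. ennreal (if y i a then ov i else a i)) \<in> borel_measurable (PiM {..<n} G)"
proof -
  have "y i \<in> measurable (PiM {..<n} G) (count_space UNIV)"
    using mech i by (simp add: mechanism_def)
  moreover have "(\<lambda>a. a i) \<in> borel_measurable (PiM {..<n} G)"
    using sets i by (intro borel_measurable_PiM_component) auto
  ultimately show ?thesis
    by (intro measurable_compose[OF _ measurable_ennreal] measurable_If) (auto simp: Measurable.pred_def)
qed

lemma mechanism_item_value_le_best_form_value:
  assumes mech: "mechanism n k G x y"
    and G: "\<And>j. j < n \<Longrightarrow> prob_space (G j)" "\<And>j. j < n \<Longrightarrow> sets (G j) = sets borel"
    and i: "i < n"
  shows "(\<integral>\<^sup>+a. ennreal (if y i a then ov i else a i) \<partial>PiM {..<n} G) \<le> best_form_value G ov i"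
proof (rule nn_integral_PiM_le_slices)
  fix z
  have "y i (z(i := v)) = y i z" for v
    using mech i by (simp add: mechanism_def)
  then have "(\<integral>\<^sup>+v. ennreal (if y i (z(i := v)) then ov i else (z(i := v)) i) \<partial>G i)
      = (if y i z then ennreal (ov i) else (\<integral>\<^sup>+v. ennreal v \<partial>G i))"
    using prob_space.emeasure_space_1[OF G(1)[OF i]] by simp
  also have "\<dots> \<le> best_form_value G ov i"
    by (simp add: best_form_value_def)
  finally show "(\<integral>\<^sup>+v. ennreal (if y i (z(i := v)) then ov i else (z(i := v)) i) \<partial>G i)
      \<le> best_form_value G ov i" .
qed (use measurable_organic_else_ad[OF mech G(2)] G i in auto)

lemma OBJ_le_sum_best_form_value:
  assumes mech: "mechanism n k G x y"
    and G: "\<And>j. j < n \<Longrightarrow> prob_space (G j)" "\<And>j. j < n \<Longrightarrow> sets (G j) = sets borel"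
  shows "OBJ n G ov x y \<le> (\<Sum>i<n. best_form_value G ov i)"
proof -
  have disjoint: "\<not> (x i a \<and> y i a)" if "i < n" for i a
    using mech that by (simp add: mechanism_def)
  have "OBJ n G ov x y \<le> (\<integral>\<^sup>+a. (\<Sum>i<n. ennreal (if y i a then ov i else a i)) \<partial>PiM {..<n} G)"
    unfolding OBJ_def
  proof (rule nn_integral_mono)
    fix a
    define c where "c i = max 0 (if y i a then ov i else a i)" for i
    have "(\<Sum>i<n. a i * of_bool (x i a) + ov i * of_bool (y i a)) \<le> (\<Sum>i<n. c i)"
      using disjoint by (intro sum_mono) (fastforce simp: c_def)
    then have "ennreal (\<Sum>i<n. a i * of_bool (x i a) + ov i * of_bool (y i a)) \<le> ennreal (\<Sum>i<n. c i)"
      by (rule ennreal_leI)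
    also have "\<dots> = (\<Sum>i<n. ennreal (c i))"
      by (rule sum_ennreal[symmetric]) (simp add: c_def)
    finally show "ennreal (\<Sum>i<n. a i * of_bool (x i a) + ov i * of_bool (y i a))
        \<le> (\<Sum>i<n. ennreal (if y i a then ov i else a i))"
      by (simp add: c_def)
  qed
  also have "\<dots> = (\<Sum>i<n. \<integral>\<^sup>+a. ennreal (if y i a then ov i else a i) \<partial>PiM {..<n} G)"
    using measurable_organic_else_ad[OF mech G(2)] by (intro nn_integral_sum) auto
  also have "\<dots> \<le> (\<Sum>i<n. best_form_value G ov i)"
    using mechanism_item_value_le_best_form_value[OF mech G] by (intro sum_mono) auto
  finally show ?thesis .
qed

lemma OBJ_fixI_ge_mean:
  assumes G: "\<And>i. i < n \<Longrightarrow> prob_space (G i)" "\<And>i. i < n \<Longrightarrow> sets (G i) = sets borel"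
    and nonneg: "\<And>i. i < n \<Longrightarrow> AE v in G i. 0 \<le> v" and ov: "\<And>i. i < n \<Longrightarrow> 0 \<le> ov i"
    and "k \<le> n"
  shows "ennreal (real k / real n) * (\<Sum>i<n. if i \<in> I then ennreal (ov i) else \<integral>\<^sup>+v. ennreal v \<partial>G i)
    \<le> OBJ_fixI n k G ov I"
proof -
  define P where "P = PiM {..<n} G"
  define L where "L a i = (if i \<in> I then ov i else a i)" for a :: "nat \<Rightarrow> real" and i
  have P: "prob_space P"
    unfolding P_def by (rule prob_space_PiM) (use G in auto)
  have L_measurable: "(\<lambda>a. ennreal (L a i)) \<in> borel_measurable P" if "i < n" for i
    using borel_measurable_PiM_component[of G i "{..<n}"] G(2) that
    by (cases "i \<in> I") (simp_all add: L_def P_def)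
  have L_mean: "(\<integral>\<^sup>+a. ennreal (L a i) \<partial>P) = (if i \<in> I then ennreal (ov i) else \<integral>\<^sup>+v. ennreal v \<partial>G i)"
    if "i < n" for i
  proof (cases "i \<in> I")
    case True
    then show ?thesis using prob_space.emeasure_space_1[OF P] by (simp add: L_def)
  next
    case False
    have "ennreal \<in> borel_measurable (G i)"
      by (subst measurable_cong_sets[OF G(2)[OF that] refl]) (rule measurable_ennreal)
    then have "(\<integral>\<^sup>+a. ennreal (a i) \<partial>P) = (\<integral>\<^sup>+v. ennreal v \<partial>G i)"
      unfolding P_def by (intro nn_integral_PiM_component) (use G(1) that in auto)
    then show ?thesis
      using False by (simp add: L_def)
  qed
  have "AE a in P. \<forall>i\<in>{..<n}. 0 \<le> L a i"
    unfolding P_def L_def using G(1) nonneg ov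
    by (intro eventually_ball_finite ballI) (auto intro: AE_PiM_component)
  then have pointwise: "AE a in P. ennreal (real k / real n) * (\<Sum>i<n. ennreal (L a i))
      \<le> ennreal (max_k k (map (L a) [0..<n]))"
    by eventually_elim (intro ennreal_max_k_ge_mean \<open>k \<le> n\<close>, simp)
  have "(\<Sum>i<n. if i \<in> I then ennreal (ov i) else \<integral>\<^sup>+v. ennreal v \<partial>G i)
      = (\<Sum>i<n. \<integral>\<^sup>+a. ennreal (L a i) \<partial>P)"
    using L_mean by simp
  also have "\<dots> = (\<integral>\<^sup>+a. (\<Sum>i<n. ennreal (L a i)) \<partial>P)"
    using L_measurable by (intro nn_integral_sum[symmetric]) auto
  finally have "ennreal (real k / real n) * (\<Sum>i<n. if i \<in> I then ennreal (ov i) else \<integral>\<^sup>+v. ennreal v \<partial>G i)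
      = (\<integral>\<^sup>+a. ennreal (real k / real n) * (\<Sum>i<n. ennreal (L a i)) \<partial>P)"
    using L_measurable by (simp add: nn_integral_cmult)
  also have "\<dots> \<le> (\<integral>\<^sup>+a. ennreal (max_k k (map (L a) [0..<n])) \<partial>P)"
    by (rule nn_integral_mono_AE[OF pointwise])
  also have "\<dots> = OBJ_fixI n k G ov I"
    by (simp add: OBJ_fixI_def P_def L_def[abs_def])
  finally show ?thesis .
qed

lemma OBJ_fixI_le_OBJ_gfix: "I \<subseteq> {..<n} \<Longrightarrow> card I \<le> k \<Longrightarrow> OBJ_fixI n k G ov I \<le> OBJ_gfix n k G ov"
  unfolding OBJ_gfix_def by (rule SUP_upper) simp

lemma OBJ_gfix_three_two_ge_organic:
  assumes G: "\<And>i. i < 3 \<Longrightarrow> prob_space (G i)"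
  shows "ennreal (max_k 2 [ov 0, ov 1, ov 2]) \<le> OBJ_gfix 3 2 G ov"
proof -
  have P: "prob_space (PiM {..<3} G)"
    by (rule prob_space_PiM) (use G in auto)
  have pair: "ennreal (ov i + ov j) \<le> OBJ_gfix 3 2 G ov" if ij: "i < 3" "j < 3" "i \<noteq> j" for i j
  proof -
    have "ennreal (ov i + ov j) = (\<integral>\<^sup>+a. ennreal (ov i + ov j) \<partial>PiM {..<3} G)"
      using prob_space.emeasure_space_1[OF P] by simp
    also have "\<dots> \<le> OBJ_fixI 3 2 G ov {i, j}"
      unfolding OBJ_fixI_def
    proof (intro nn_integral_mono ennreal_leI)
      fix a :: "nat \<Rightarrow> real"
      have "[0..<3] = [0, 1, 2::nat]"
        by (simp add: upt_rec)
      then show "ov i + ov j \<le> max_k 2 (map (\<lambda>m. if m \<in> {i, j} then ov m else a m) [0..<3])"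
        using ij by (auto simp: max_k_two_of_three less_Suc_eq numeral_3_eq_3)
    qed
    also have "\<dots> \<le> OBJ_gfix 3 2 G ov"
      using ij by (intro OBJ_fixI_le_OBJ_gfix) (auto simp: card_insert_if)
    finally show ?thesis .
  qed
  show ?thesis
    using pair[of 0 1] pair[of 0 2] pair[of 1 2]
    by (simp add: max_k_two_of_three max_def)
qed

lemma OBJ_gfix_three_two_ge_best_form_values:
  assumes G: "\<And>i. i < 3 \<Longrightarrow> prob_space (G i)" "\<And>i. i < 3 \<Longrightarrow> sets (G i) = sets borel"
    and nonneg: "\<And>i. i < 3 \<Longrightarrow> AE v in G i. 0 \<le> v" and ov: "\<And>i. i < 3 \<Longrightarrow> 0 \<le> ov i"
  shows "ennreal (2/3) * (\<Sum>i<3. best_form_value G ov i) \<le> OBJ_gfix 3 2 G ov"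
proof -
  define J where "J = {i. i < 3 \<and> (\<integral>\<^sup>+v. ennreal v \<partial>G i) \<le> ennreal (ov i)}"
  have best_J: "best_form_value G ov i = (if i \<in> J then ennreal (ov i) else \<integral>\<^sup>+v. ennreal v \<partial>G i)"
    if "i < 3" for i
    using that by (auto simp: best_form_value_def J_def max_def)
  show ?thesis
  proof (cases "card J \<le> 2")
    case True
    have "ennreal (2/3) * (\<Sum>i<3. best_form_value G ov i)
        = ennreal (real 2 / real 3) * (\<Sum>i<3. if i \<in> J then ennreal (ov i) else \<integral>\<^sup>+v. ennreal v \<partial>G i)"
      using best_J by simp
    also have "\<dots> \<le> OBJ_fixI 3 2 G ov J"
      by (rule OBJ_fixI_ge_mean) (use G nonneg ov in auto)
    also have "\<dots> \<le> OBJ_gfix 3 2 G ov"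
      using True by (intro OBJ_fixI_le_OBJ_gfix) (auto simp: J_def)
    finally show ?thesis .
  next
    case False
    have "J \<subseteq> {..<3}" by (auto simp: J_def)
    moreover from this False have "card J = card {..<3::nat}"
      using card_mono[of "{..<3::nat}" J] by simp
    ultimately have "J = {..<3}"
      by (intro card_subset_eq) auto
    have "(\<Sum>i<3. best_form_value G ov i) = (\<Sum>i<3. ennreal (ov i))"
      using best_J \<open>J = {..<3}\<close> by simp
    also have "\<dots> = ennreal (sum_list [ov 0, ov 1, ov 2])"
      using ov by (subst sum_ennreal) (auto simp: eval_nat_numeral)
    finally have "ennreal (2/3) * (\<Sum>i<3. best_form_value G ov i)
        = ennreal (real 2 / real (length [ov 0, ov 1, ov 2]) * sum_list [ov 0, ov 1, ov 2])"
      using ov by (subst ennreal_mult) auto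
    also have "\<dots> \<le> ennreal (max_k 2 [ov 0, ov 1, ov 2])"
      by (intro ennreal_leI max_k_ge_mean) simp
    also have "\<dots> \<le> OBJ_gfix 3 2 G ov"
      by (rule OBJ_gfix_three_two_ge_organic) (use G in auto)
    finally show ?thesis .
  qed
qed

theorem theorem2:
  fixes G :: "nat \<Rightarrow> real measure" and ov :: "nat \<Rightarrow> real"
    and x y :: "nat \<Rightarrow> (nat \<Rightarrow> real) \<Rightarrow> bool"
  assumes "\<forall>i<3. regular_dist (G i)"
    and "\<forall>i<3. AE v in G i. 0 \<le> v"
    and "\<forall>i<3. 0 \<le> ov i"
    and "mechanism 3 2 G x y"
  shows "OBJ_gfix 3 2 G ov \<ge> ennreal ((4/5)^3) * OBJ 3 G ov x y"
proof -
  have G: "\<And>i. i < 3 \<Longrightarrow> prob_space (G i)" "\<And>i. i < 3 \<Longrightarrow> sets (G i) = sets borel"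
    using assms(1) by (auto simp: regular_dist_def sets_regular_dist)
  have "ennreal ((4/5)^3) * OBJ 3 G ov x y \<le> ennreal (2/3) * OBJ 3 G ov x y"
    by (intro mult_right_mono ennreal_leI) (auto simp: power3_eq_cube)
  also have "\<dots> \<le> ennreal (2/3) * (\<Sum>i<3. best_form_value G ov i)"
    using OBJ_le_sum_best_form_value[OF assms(4)] G by (intro mult_left_mono) auto
  also have "\<dots> \<le> OBJ_gfix 3 2 G ov"
    by (rule OBJ_gfix_three_two_ge_best_form_values) (use G assms(2,3) in auto)
  finally show ?thesis .
qed
end
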